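(* Let $n \geq 2$ and let $x_1, \dots, x_n$ be real numbers with mean $\mu = \frac{1}{n}\sum_{i=1}^n x_i > 0$ and variance $\sigma^2 = \frac{1}{n}\sum_{i=1}^n (x_i-\mu)^2$, where $\sigma \ge 0$. (a) If $0 \leq \sigma/\mu < 1/\sqrt{n-1}$, then each $x_i$ is positive and $$\left(\mu - \sigma\sqrt{n-1}\right)\left(\mu + \frac{\sigma}{\sqrt{n-1}}\right)^{n-1} \;\leq\; x_1 x_2 \cdots x_n \;\leq\; \left(\mu + \sigma\sqrt{n-1}\right)\left(\mu - \frac{\sigma}{\sqrt{n-1}}\right)^{n-1}.$$ Both bounds are sharp: for every $\mu>0$ and $\sigma$ with $0 \le \sigma/\mu < 1/\sqrt{n-1}$, each bound is attained by some sequence of $n$ real numbers with mean $\mu$ and variance $\sigma^2$. (b) If every $x_i$ is positive, then $0 \leq \sigma/\mu < \sqrt{n-1}$ and the two inequalities displayed in (a) still hold. The upper bound is sharp: for every $\mu>0$ and $\sigma$ with $0\le \sigma/\mu<\sqrt{n-1}$ it is attained by some positive sequence with mean $\mu$ and variance $\sigma^2$. For $1/\sqrt{n-1} < \sigma/\mu < \sqrt{n-1}$ the lower bound expression $(\mu - \sigma\sqrt{n-1})(\mu + \sigma/\sqrt{n-1})^{n-1}$ is negative; replacing the lower bound by $\max\left\{0, (\mu - \sigma\sqrt{n-1})(\mu + \sigma/\sqrt{n-1})^{n-1}\right\}$, the lower inequality is best possible on the entire range $0 \le \sigma/\mu < \sqrt{n-1}$, i.e. this quantity equals the infimum of $x_1\cdots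 x_n$ over all positive sequences of length $n$ with mean $\mu$ and variance $\sigma^2$.
   Context: Mean and variance are the population mean and variance: $\mu = \frac1n\sum x_i$, $\sigma^2 = \frac1n \sum (x_i-\mu)^2$, with $\sigma$ the nonnegative square root. *)

theory Defs
  imports Complex_Main
begin

text \<open>A sequence x_1..x_n is represented by x :: nat => real on indices {..<n}.\<close>

definition mean :: "nat \<Rightarrow> (nat \<Rightarrow> real) \<Rightarrow> real" where
  "mean n x = (\<Sum>i<n. x i) / real n"

definition variance :: "nat \<Rightarrow> (nat \<Rightarrow> real) \<Rightarrow> real" where
  "variance n x = (\<Sum>i<n. (x i - mean n x)^2) / real n"

definition sdev :: "nat \<Rightarrow> (nat \<Rightarrow> real) \<Rightarrow> real" where
  "sdev n x = sqrt (variance n x)"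

definition lower_bd :: "nat \<Rightarrow> real \<Rightarrow> real \<Rightarrow> real" where
  "lower_bd n \<mu> \<sigma> = (\<mu> - \<sigma> * sqrt (real n - 1)) * (\<mu> + \<sigma> / sqrt (real n - 1)) ^ (n - 1)"

definition upper_bd :: "nat \<Rightarrow> real \<Rightarrow> real \<Rightarrow> real" where
  "upper_bd n \<mu> \<sigma> = (\<mu> + \<sigma> * sqrt (real n - 1)) * (\<mu> - \<sigma> / sqrt (real n - 1)) ^ (n - 1)"

end

theory Submission
  imports Defs "HOL-Analysis.Analysis"
begin

text \<open>
  By compactness the product attains its maximum and minimum over the nonnegative sequences
  with prescribed mean \<mu> and variance.  If three entries a \<le> b \<le> c of a maximiser had a < b,
  replacing them by a triple (p, p, q) with the same sum and sum of squares would increase the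
  product (a discriminant computation), so in a maximiser all entries but the largest coincide;
  dually, all entries of a minimiser but the smallest coincide, provided every admissible
  sequence is positive, which Samuelson's inequality guarantees when \<sigma> sqrt(n-1) < \<mu>.  The two
  moment equations then force the configurations with one entry \<mu> + \<sigma> sqrt(n-1) and n-1 entries
  \<mu> - \<sigma>/sqrt(n-1), or one entry \<mu> - \<sigma> sqrt(n-1) and n-1 entries \<mu> + \<sigma>/sqrt(n-1), whose products
  are the two bounds.  When \<sigma> sqrt(n-1) \<ge> \<mu>, one can instead start with an arbitrarily small
  positive entry and complete it by an upper extremal configuration of length n-1, so the
  infimum over positive sequences is 0.
\<close>

section \<open>Mean, variance and Samuelson's inequality\<close>

lemma sum_sq_dev_eq:
  fixes x :: "nat \<Rightarrow> real"
  shows "(\<Sum>i<n. (x i - c)^2) = real n * variance n x + real n * (mean n x - c)^2"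
proof (cases "n = 0")
  case False
  have "(\<Sum>i<n. (x i - c)^2)
      = (\<Sum>i<n. (x i - mean n x)^2 + 2 * (mean n x - c) * (x i - mean n x) + (mean n x - c)^2)"
    by (intro sum.cong) (auto simp: power2_eq_square algebra_simps)
  also have "\<dots> = (\<Sum>i<n. (x i - mean n x)^2) + 2 * (mean n x - c) * (\<Sum>i<n. x i - mean n x)
      + real n * (mean n x - c)^2"
    by (simp add: sum.distrib sum_distrib_left)
  also have "(\<Sum>i<n. x i - mean n x) = 0"
    using False by (simp add: sum_subtractf mean_def)
  finally show ?thesis
    using False by (simp add: variance_def)
qed (simp add: variance_def)

lemma sum_eq_iff_mean_eq:
  assumes "0 < n"
  shows "(\<Sum>i<n. x i) = real n * \<mu> \<longleftrightarrow> mean n x = \<mu>"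
  using assms by (auto simp: mean_def field_simps)

lemma mean_pos:
  assumes "0 < n" "\<forall>i<n. 0 < x i"
  shows "0 < mean n x"
  unfolding mean_def using assms by (intro divide_pos_pos sum_pos) (auto simp: lessThan_empty_iff)

lemma variance_nonneg: "0 \<le> variance n x"
  unfolding variance_def by (intro divide_nonneg_nonneg sum_nonneg) auto

lemma sdev_nonneg: "0 \<le> sdev n x"
  by (simp add: sdev_def variance_nonneg)

lemma sdev_squared: "(sdev n x)^2 = variance n x"
  by (simp add: sdev_def variance_nonneg)

lemma samuelson_inequality:
  fixes x :: "nat \<Rightarrow> real"
  assumes "k < n"
  shows "(x k - mean n x)^2 \<le> (real n - 1) * variance n x"
proof -
  define \<mu> where "\<mu> = mean n x"
  define J where "J = {..<n} - {k}"
  have "(\<Sum>i<n. x i - \<mu>) = 0"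
    using assms by (simp add: sum_subtractf mean_def \<mu>_def)
  then have "(\<Sum>i\<in>J. x i - \<mu>) = - (x k - \<mu>)"
    using assms by (simp add: J_def sum.remove)
  moreover have "(\<Sum>i\<in>J. x i - \<mu>)^2 \<le> (\<Sum>i\<in>J. (x i - \<mu>)^2) * card J"
    by (rule sum_squared_le_sum_of_squares)
  ultimately have "(x k - \<mu>)^2 \<le> (real n - 1) * (\<Sum>i\<in>J. (x i - \<mu>)^2)"
    using assms by (simp add: J_def of_nat_diff mult.commute power2_commute)
  moreover have "(\<Sum>i<n. (x i - \<mu>)^2) = (x k - \<mu>)^2 + (\<Sum>i\<in>J. (x i - \<mu>)^2)"
    using assms by (simp add: J_def sum.remove)
  ultimately have "real n * (x k - \<mu>)^2 \<le> (real n - 1) * (\<Sum>i<n. (x i - \<mu>)^2)"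
    by (simp add: algebra_simps)
  moreover have "0 < real n"
    using assms by simp
  ultimately show ?thesis
    by (simp add: variance_def \<mu>_def pos_le_divide_eq mult.commute)
qed

lemma pos_if_variance_small:
  fixes x :: "nat \<Rightarrow> real"
  assumes "(real n - 1) * variance n x < (mean n x)^2" "0 < mean n x" "k < n"
  shows "0 < x k"
proof -
  have "(x k - mean n x)^2 < (mean n x)^2"
    using samuelson_inequality[of k n x] assms(1,3) by linarith
  then have "\<bar>x k - mean n x\<bar>^2 < (mean n x)^2"
    by simp
  then have "\<bar>x k - mean n x\<bar> < mean n x"
    using assms(2) power_less_imp_less_base less_imp_le by blast
  then show ?thesis by linarith
qed

lemma variance_less_if_pos:
  fixes x :: "nat \<Rightarrow> real"
  assumes "2 \<le> n" "\<forall>i<n. 0 < x i"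
  shows "variance n x < (real n - 1) * (mean n x)^2"
proof -
  have "x i < (\<Sum>i<n. x i)" if "i < n" for i
  proof -
    have "(if i = 0 then 1 else 0) \<in> {..<n} - {i}"
      using assms(1) by auto
    then have "0 < (\<Sum>j\<in>{..<n} - {i}. x j)"
      using assms(2) by (intro sum_pos) auto
    then show ?thesis
      using that by (simp add: sum.remove)
  qed
  then have "(\<Sum>i<n. (x i)^2) < (\<Sum>i<n. x i * (\<Sum>j<n. x j))"
    using assms by (intro sum_strict_mono) (auto simp: power2_eq_square lessThan_empty_iff)
  also have "\<dots> = (real n * mean n x)^2"
    using assms(1) by (simp add: mean_def power2_eq_square sum_distrib_right)
  finally have "real n * (variance n x + (mean n x)^2) < real n * (real n * (mean n x)^2)"
    using sum_sq_dev_eq[of x 0 n] by (simp add: power2_eq_square algebra_simps)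
  then have "variance n x + (mean n x)^2 < real n * (mean n x)^2"
    using assms(1) mult_less_cancel_left_pos[of "real n"] by simp
  then show ?thesis
    by (simp add: algebra_simps)
qed

section \<open>Spike sequences\<close>

definition spike_seq :: "nat \<Rightarrow> real \<Rightarrow> real \<Rightarrow> nat \<Rightarrow> real" where
  "spike_seq n \<mu> d i = (if i = 0 then \<mu> + (real n - 1) * d else \<mu> - d)"

lemma sum_spike_seq:
  assumes "0 < n"
  shows "(\<Sum>i<n. f (spike_seq n \<mu> d i)) = f (\<mu> + (real n - 1) * d) + (real n - 1) * f (\<mu> - d)"
proof -
  obtain m where "n = Suc m"
    using assms by (cases n) auto
  then show ?thesis
    by (simp add: spike_seq_def sum.lessThan_Suc_shift del: sum.lessThan_Suc)
qed

lemma prod_spike_seq: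
  assumes "0 < n"
  shows "(\<Prod>i<n. spike_seq n \<mu> d i) = (\<mu> + (real n - 1) * d) * (\<mu> - d)^(n - 1)"
proof -
  obtain m where "n = Suc m"
    using assms by (cases n) auto
  then show ?thesis
    by (simp add: spike_seq_def prod.lessThan_Suc_shift del: prod.lessThan_Suc)
qed

lemma mean_spike_seq:
  assumes "0 < n"
  shows "mean n (spike_seq n \<mu> d) = \<mu>"
  using assms sum_spike_seq[OF assms, of "\<lambda>t. t"] by (simp add: mean_def field_simps)

lemma variance_spike_seq:
  assumes "0 < n"
  shows "variance n (spike_seq n \<mu> d) = (real n - 1) * d^2"
  using assms sum_spike_seq[OF assms, where f = "\<lambda>t. (t - \<mu>)^2" and \<mu> = \<mu> and d = d]
  by (simp add: variance_def mean_spike_seq field_simps power2_eq_square)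

lemma spike_seq_pos:
  assumes "0 \<le> d" "d < \<mu>"
  shows "0 < spike_seq n \<mu> d i"
proof -
  have "0 \<le> (real n - 1) * d \<or> n = 0"
    using assms(1) by (cases n) auto
  then show ?thesis
    using assms by (auto simp: spike_seq_def)
qed

lemma mult_div_sqrt:
  assumes "0 \<le> a"
  shows "a * \<sigma> / sqrt a = \<sigma> * sqrt a"
proof -
  have "a * \<sigma> / sqrt a = \<sigma> * (a / sqrt a)"
    by simp
  then show ?thesis
    using assms by (simp add: real_div_sqrt)
qed

lemma upper_bd_eq_prod_spike_seq:
  assumes "2 \<le> n"
  shows "upper_bd n \<mu> \<sigma> = (\<Prod>i<n. spike_seq n \<mu> (\<sigma> / sqrt (real n - 1)) i)"
proof -
  have "(real n - 1) * (\<sigma> / sqrt (real n - 1)) = \<sigma> * sqrt (real n - 1)"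
    using assms by (simp add: mult_div_sqrt)
  then show ?thesis
    using assms by (simp add: prod_spike_seq upper_bd_def)
qed

lemma lower_bd_eq_prod_spike_seq:
  assumes "2 \<le> n"
  shows "lower_bd n \<mu> \<sigma> = (\<Prod>i<n. spike_seq n \<mu> (- (\<sigma> / sqrt (real n - 1))) i)"
proof -
  have "(real n - 1) * (\<sigma> / sqrt (real n - 1)) = \<sigma> * sqrt (real n - 1)"
    using assms by (simp add: mult_div_sqrt)
  then show ?thesis
    using assms by (simp add: prod_spike_seq lower_bd_def)
qed

section \<open>Three-point smoothing\<close>

lemma sum_zero_triple_prod_less:
  fixes y1 y2 y3 :: real
  assumes "y1 < y2" "y2 \<le> y3" "y1 + y2 + y3 = 0"
  shows "y1 * y2 * y3 < (sqrt (2 * (y1^2 + y2^2 + y3^2) / 3))^3 / 4"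
proof -
  define T where "T = y1^2 + y2^2 + y3^2"
  define R where "R = sqrt (2 * T / 3)"
  have y3: "y3 = - y1 - y2"
    using assms(3) by simp
  have "0 < y1^2 + y2^2"
    using assms(1) by (auto simp: sum_power2_gt_zero_iff)
  then have "0 < T"
    by (simp add: T_def add_pos_nonneg)
  then have "0 < R" and R2: "R^2 = 2 * T / 3"
    by (simp_all add: R_def)
  have "(R^3 / 4)^2 = (R^2)^3 / 16"
    by (simp add: power_divide flip: power_mult)
  then have R6: "(R^3 / 4)^2 = T^3 / 54"
    unfolding R2 by (simp add: power_divide)
  have "y1 * y2 * y3 < R^3 / 4"
  proof (cases "y1 * y2 * y3 \<le> 0")
    case True
    moreover have "0 < R^3 / 4"
      using \<open>0 < R\<close> by simp
    ultimately show ?thesis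
      by linarith
  next
    case False
    have "y2 < y3"
    proof (rule ccontr)
      assume "\<not> y2 < y3"
      then have "y3 = y2" "y1 = -2 * y2"
        using assms by simp_all
      moreover have "0 < y2"
        using assms(1) calculation by simp
      ultimately have "y1 * y2 * y3 = -2 * y2^3" "0 < y2^3"
        by (simp_all add: power3_eq_cube)
      then show False
        using False by simp
    qed
    \<comment> \<open>the discriminant of the cubic with roots y1, y2, y3\<close>
    have "T^3 - 54 * (y1 * y2 * y3)^2 = 2 * ((y1 - y2)^2 * (y1 - y3)^2 * (y2 - y3)^2)"
      unfolding T_def y3 by algebra
    moreover have "0 < (y1 - y2)^2 * (y1 - y3)^2 * (y2 - y3)^2"
      using assms \<open>y2 < y3\<close> by simp
    ultimately have "(y1 * y2 * y3)^2 < (R^3 / 4)^2"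
      using R6 by simp
    then show ?thesis
      using \<open>0 < R\<close> power_less_imp_less_base[of "y1 * y2 * y3" 2 "R^3 / 4"] by simp
  qed
  then show ?thesis
    unfolding R_def T_def .
qed

lemma triple_smoothing_increases_prod:
  fixes a b c :: real
  assumes "a < b" "b \<le> c"
  obtains p q where "2 * p + q = a + b + c" "2 * p^2 + q^2 = a^2 + b^2 + c^2"
    "a \<le> p" "p \<le> q" "a * b * c < p * p * q"
proof -
  define m where "m = (a + b + c) / 3"
  define y1 y2 y3 where "y1 = a - m" and "y2 = b - m" and "y3 = c - m"
  define T where "T = y1^2 + y2^2 + y3^2"
  define R where "R = sqrt (2 * T / 3)"
  have y3: "y3 = - y1 - y2"
    by (simp add: y1_def y2_def y3_def m_def field_simps)
  have abc: "a = m + y1" "b = m + y2" "c = m + y3"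
    by (simp_all add: y1_def y2_def y3_def)
  have prod_less: "y1 * y2 * y3 < R^3 / 4"
    unfolding R_def T_def using assms
    by (intro sum_zero_triple_prod_less) (simp_all add: y1_def y2_def y3_def m_def field_simps)
  have "0 \<le> R" and R2: "R^2 = 2 * T / 3"
    by (simp_all add: R_def T_def)
  define p q where "p = m - R / 2" and "q = m + R"
  have "2 * p + q = a + b + c"
    by (simp add: p_def q_def m_def field_simps)
  moreover have "2 * p^2 + q^2 = a^2 + b^2 + c^2"
  proof -
    have "2 * p^2 + q^2 = 3 * m^2 + 3 / 2 * R^2"
      by (simp add: p_def q_def power2_eq_square algebra_simps)
    also have "\<dots> = a^2 + b^2 + c^2"
      unfolding R2 abc T_def y3 by algebra
    finally show ?thesis .
  qed
  moreover have "a \<le> p"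
  proof -
    have "0 \<le> (y2 - y1) * (y3 - y1)"
      using assms by (simp add: y1_def y2_def y3_def)
    then have "T \<le> 6 * y1^2"
      unfolding T_def y3 by (simp add: power2_eq_square algebra_simps)
    then have "R^2 \<le> (- 2 * y1)^2"
      using R2 by (simp add: power2_eq_square)
    moreover have "y1 \<le> 0"
      unfolding y1_def m_def using assms by (simp add: field_simps)
    ultimately have "R \<le> - 2 * y1"
      using power2_le_imp_le[of R "- 2 * y1"] by simp
    then show ?thesis
      by (simp add: p_def abc)
  qed
  moreover have "p \<le> q"
    using \<open>0 \<le> R\<close> by (simp add: p_def q_def)
  moreover have "a * b * c < p * p * q"
  proof -
    have "a * b * c = m^3 - m * T / 2 + y1 * y2 * y3"
      unfolding abc T_def y3 by algebra
    moreover have "p * p * q = m^3 - m * (3 / 4 * R^2) + R^3 / 4"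
      by (simp add: p_def q_def power3_eq_cube power2_eq_square algebra_simps)
    ultimately show ?thesis
      using prod_less R2 by simp
  qed
  ultimately show ?thesis
    using that by blast
qed

lemma triple_smoothing_decreases_prod:
  fixes a b c :: real
  assumes "a \<le> b" "b < c"
  obtains p q where "p + 2 * q = a + b + c" "p^2 + 2 * q^2 = a^2 + b^2 + c^2"
    "p * q * q < a * b * c"
proof -
  from assms have "-c < -b" "-b \<le> -a"
    by simp_all
  then obtain p q where "2 * p + q = (-c) + (-b) + (-a)" "2 * p^2 + q^2 = (-c)^2 + (-b)^2 + (-a)^2"
      "(-c) * (-b) * (-a) < p * p * q"
    by (meson triple_smoothing_increases_prod)
  then have "(-q) + 2 * (-p) = a + b + c" "(-q)^2 + 2 * (-p)^2 = a^2 + b^2 + c^2"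
      "(-q) * (-p) * (-p) < a * b * c"
    by (simp_all add: algebra_simps)
  then show ?thesis
    using that by blast
qed

lemma sum_fun_upd3:
  assumes "finite I" "i \<in> I" "j \<in> I" "k \<in> I" "i \<noteq> j" "i \<noteq> k" "j \<noteq> k"
  shows "(\<Sum>l\<in>I. g ((x(i := \<alpha>, j := \<beta>, k := \<gamma>)) l))
    = (\<Sum>l\<in>I - {i, j, k}. g (x l)) + g \<alpha> + g \<beta> + g \<gamma>"
proof -
  have I: "I = insert i (insert j (insert k (I - {i, j, k})))"
    using assms by auto
  have "(\<Sum>l\<in>I. g ((x(i := \<alpha>, j := \<beta>, k := \<gamma>)) l))
      = g \<alpha> + g \<beta> + g \<gamma> + (\<Sum>l\<in>I - {i, j, k}. g ((x(i := \<alpha>, j := \<beta>, k := \<gamma>)) l))"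
    using assms by (subst I) (simp add: algebra_simps)
  also have "(\<Sum>l\<in>I - {i, j, k}. g ((x(i := \<alpha>, j := \<beta>, k := \<gamma>)) l))
      = (\<Sum>l\<in>I - {i, j, k}. g (x l))"
    by (intro sum.cong) auto
  finally show ?thesis
    by (simp only: add_ac)
qed

lemma prod_fun_upd3:
  assumes "finite I" "i \<in> I" "j \<in> I" "k \<in> I" "i \<noteq> j" "i \<noteq> k" "j \<noteq> k"
  shows "(\<Prod>l\<in>I. (x(i := \<alpha>, j := \<beta>, k := \<gamma>)) l)
    = (\<Prod>l\<in>I - {i, j, k}. x l) * (\<alpha> * \<beta> * \<gamma>)"
proof -
  have I: "I = insert i (insert j (insert k (I - {i, j, k})))"
    using assms by auto
  have "(\<Prod>l\<in>I. (x(i := \<alpha>, j := \<beta>, k := \<gamma>)) l)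
      = \<alpha> * \<beta> * \<gamma> * (\<Prod>l\<in>I - {i, j, k}. (x(i := \<alpha>, j := \<beta>, k := \<gamma>)) l)"
    using assms by (subst I) (simp add: mult_ac)
  also have "(\<Prod>l\<in>I - {i, j, k}. (x(i := \<alpha>, j := \<beta>, k := \<gamma>)) l)
      = (\<Prod>l\<in>I - {i, j, k}. x l)"
    by (intro prod.cong) auto
  finally show ?thesis
    by (simp only: mult_ac)
qed

lemma mean_variance_fun_upd3:
  fixes x :: "nat \<Rightarrow> real"
  assumes "i < n" "j < n" "k < n" "i \<noteq> j" "i \<noteq> k" "j \<noteq> k"
    and "\<alpha> + \<beta> + \<gamma> = x i + x j + x k" "\<alpha>^2 + \<beta>^2 + \<gamma>^2 = (x i)^2 + (x j)^2 + (x k)^2"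
  shows "mean n (x(i := \<alpha>, j := \<beta>, k := \<gamma>)) = mean n x"
    and "variance n (x(i := \<alpha>, j := \<beta>, k := \<gamma>)) = variance n x"
proof -
  let ?y = "x(i := \<alpha>, j := \<beta>, k := \<gamma>)"
  have "(\<Sum>l<n. g (?y l)) = (\<Sum>l<n. g (x l))"
    if "g \<alpha> + g \<beta> + g \<gamma> = g (x i) + g (x j) + g (x k)" for g :: "real \<Rightarrow> real"
    using sum_fun_upd3[of "{..<n}" i j k g x \<alpha> \<beta> \<gamma>] sum_fun_upd3[of "{..<n}" i j k g x "x i" "x j" "x k"]
      assms(1-6) that by simp
  from this[of "\<lambda>t. t"] this[of "\<lambda>t. t^2"] have "(\<Sum>l<n. ?y l) = (\<Sum>l<n. x l)"
    and "(\<Sum>l<n. (?y l)^2) = (\<Sum>l<n. (x l)^2)"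
    using assms(7,8) by simp_all
  then show "mean n ?y = mean n x" and "variance n ?y = variance n x"
    using sum_sq_dev_eq[of ?y 0 n] sum_sq_dev_eq[of x 0 n] assms(1)
    by (simp_all add: mean_def)
qed

lemma prod_fun_upd3_less:
  fixes x :: "nat \<Rightarrow> real"
  assumes "i < n" "j < n" "k < n" "i \<noteq> j" "i \<noteq> k" "j \<noteq> k"
    and "\<forall>l<n. 0 < x l" "\<alpha> * \<beta> * \<gamma> < x i * x j * x k"
  shows "(\<Prod>l<n. (x(i := \<alpha>, j := \<beta>, k := \<gamma>)) l) < (\<Prod>l<n. x l)"
proof -
  have "0 < (\<Prod>l\<in>{..<n} - {i, j, k}. x l)"
    using assms(7) by (intro prod_pos) auto
  then show ?thesis
    using prod_fun_upd3[of "{..<n}" i j k x \<alpha> \<beta> \<gamma>] prod_fun_upd3[of "{..<n}" i j k x "x i" "x j" "x k"]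
      assms(1-6,8) by simp
qed

section \<open>Extremal sequences\<close>

definition nonneg_seqs_mean_var :: "nat \<Rightarrow> real \<Rightarrow> real \<Rightarrow> (nat \<Rightarrow> real) set" where
  "nonneg_seqs_mean_var n \<mu> v = {x. (\<forall>i<n. 0 \<le> x i) \<and> mean n x = \<mu> \<and> variance n x = v}"

lemma compactin_bounded_seqs_mean_var:
  assumes "0 < n"
  shows "compactin (product_topology (\<lambda>_. euclideanreal) {..<n})
    {x \<in> {..<n} \<rightarrow>\<^sub>E {0..c}. mean n x = \<mu> \<and> variance n x = v}"
proof -
  let ?X = "product_topology (\<lambda>_. euclideanreal) {..<n}"
  have mean: "continuous_map ?X euclideanreal (mean n)"
    unfolding mean_def[abs_def] using assms
    by (intro continuous_intros) (auto intro: continuous_map_product_projection)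
  have "continuous_map ?X euclideanreal (variance n)"
    unfolding variance_def[abs_def] using assms
    by (intro continuous_intros mean) (auto intro: continuous_map_product_projection)
  then have "closedin ?X ({x \<in> topspace ?X. mean n x \<in> {\<mu>}} \<inter> {x \<in> topspace ?X. variance n x \<in> {v}})"
    using mean by (intro closedin_Int closedin_continuous_map_preimage) auto
  moreover have "compactin ?X ({..<n} \<rightarrow>\<^sub>E {0..c})"
    by (simp add: compactin_PiE)
  moreover have "{x \<in> {..<n} \<rightarrow>\<^sub>E {0..c}. mean n x = \<mu> \<and> variance n x = v}
      = ({x \<in> topspace ?X. mean n x \<in> {\<mu>}} \<inter> {x \<in> topspace ?X. variance n x \<in> {v}})
        \<inter> ({..<n} \<rightarrow>\<^sub>E {0..c})"
    by (auto simp: PiE_def Pi_def)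
  ultimately show ?thesis
    by (simp add: closed_Int_compactin)
qed

lemma compact_prod_image_nonneg_seqs_mean_var:
  assumes "0 < n"
  shows "compact ((\<lambda>x. \<Prod>i<n. x i) ` nonneg_seqs_mean_var n \<mu> v)"
proof -
  \<comment> \<open>entries of a nonnegative sequence are bounded by its sum, which is fixed\<close>
  define K where "K = {x \<in> {..<n} \<rightarrow>\<^sub>E {0..real n * \<mu>}. mean n x = \<mu> \<and> variance n x = v}"
  have "compact ((\<lambda>x. \<Prod>i<n. x i) ` K)"
    unfolding compactin_euclidean_iff[symmetric] K_def using compactin_bounded_seqs_mean_var[OF assms]
    by (rule image_compactin) (auto intro!: continuous_intros intro: continuous_map_product_projection)
  moreover have "K \<subseteq> nonneg_seqs_mean_var n \<mu> v"
    by (auto simp: K_def nonneg_seqs_mean_var_def PiE_def Pi_def)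
  moreover have "(\<lambda>x. \<Prod>i<n. x i) ` nonneg_seqs_mean_var n \<mu> v \<subseteq> (\<lambda>x. \<Prod>i<n. x i) ` K"
  proof (rule image_subsetI)
    fix x
    assume x: "x \<in> nonneg_seqs_mean_var n \<mu> v"
    have "x i \<le> real n * \<mu>" if "i < n" for i
      using x that member_le_sum[of i "{..<n}" x] assms
      by (auto simp: nonneg_seqs_mean_var_def sum_eq_iff_mean_eq[symmetric])
    then have "restrict x {..<n} \<in> K"
      using x by (auto simp: K_def nonneg_seqs_mean_var_def mean_def variance_def)
    moreover have "(\<Prod>i<n. x i) = (\<Prod>i<n. restrict x {..<n} i)"
      by simp
    ultimately show "(\<Prod>i<n. x i) \<in> (\<lambda>x. \<Prod>i<n. x i) ` K"
      by blast
  qed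
  ultimately show ?thesis
    by (metis image_mono subset_antisym)
qed

lemma nonneg_seqs_mean_var_prod_attains_max:
  assumes "0 < n" "x \<in> nonneg_seqs_mean_var n \<mu> v"
  obtains xm where "xm \<in> nonneg_seqs_mean_var n \<mu> v"
    "\<forall>y\<in>nonneg_seqs_mean_var n \<mu> v. (\<Prod>i<n. y i) \<le> (\<Prod>i<n. xm i)"
  using compact_attains_sup[OF compact_prod_image_nonneg_seqs_mean_var[OF assms(1)]] assms(2) by blast

lemma nonneg_seqs_mean_var_prod_attains_min:
  assumes "0 < n" "x \<in> nonneg_seqs_mean_var n \<mu> v"
  obtains xm where "xm \<in> nonneg_seqs_mean_var n \<mu> v"
    "\<forall>y\<in>nonneg_seqs_mean_var n \<mu> v. (\<Prod>i<n. xm i) \<le> (\<Prod>i<n. y i)"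
  using compact_attains_inf[OF compact_prod_image_nonneg_seqs_mean_var[OF assms(1)]] assms(2) by blast

lemma nonneg_seqs_mean_var_maximizer_shape:
  assumes max: "xm \<in> nonneg_seqs_mean_var n \<mu> v"
      "\<forall>y\<in>nonneg_seqs_mean_var n \<mu> v. (\<Prod>l<n. y l) \<le> (\<Prod>l<n. xm l)"
    and pos: "\<forall>l<n. 0 < xm l"
    and ijk: "i < n" "j < n" "k < n" "i \<noteq> j" "i \<noteq> k" "j \<noteq> k"
    and "xm i \<le> xm j" "xm j \<le> xm k"
  shows "xm i = xm j"
proof (rule ccontr)
  assume "xm i \<noteq> xm j"
  with \<open>xm i \<le> xm j\<close> have "xm i < xm j"
    by simp
  then obtain p q where pq: "2 * p + q = xm i + xm j + xm k" "2 * p^2 + q^2 = (xm i)^2 + (xm j)^2 + (xm k)^2"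
      "xm i \<le> p" "p \<le> q" "xm i * xm j * xm k < p * p * q"
    using \<open>xm j \<le> xm k\<close> by (rule triple_smoothing_increases_prod)
  define y where "y = xm(i := p, j := p, k := q)"
  have "0 < xm i"
    using pos ijk by simp
  then have y_pos: "\<forall>l<n. 0 < y l"
    using pos pq by (auto simp: y_def)
  have "mean n y = \<mu>" "variance n y = v"
    using mean_variance_fun_upd3[OF ijk, of p p q xm] pq max(1)
    by (simp_all add: y_def nonneg_seqs_mean_var_def)
  then have "y \<in> nonneg_seqs_mean_var n \<mu> v"
    using y_pos by (simp add: nonneg_seqs_mean_var_def less_imp_le)
  moreover have "(\<Prod>l<n. xm l) < (\<Prod>l<n. y l)"
  proof -
    have "y i * y j * y k = p * p * q"
      using ijk by (simp add: y_def)
    then have "(\<Prod>l<n. (y(i := xm i, j := xm j, k := xm k)) l) < (\<Prod>l<n. y l)"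
      using prod_fun_upd3_less[OF ijk y_pos] pq(5) by simp
    moreover have "y(i := xm i, j := xm j, k := xm k) = xm"
      by (simp add: y_def fun_eq_iff)
    ultimately show ?thesis
      by simp
  qed
  ultimately show False
    using max(2) by fastforce
qed

lemma nonneg_seqs_mean_var_minimizer_shape:
  assumes min: "xm \<in> nonneg_seqs_mean_var n \<mu> v"
      "\<forall>y\<in>nonneg_seqs_mean_var n \<mu> v. (\<Prod>l<n. xm l) \<le> (\<Prod>l<n. y l)"
    and small: "(real n - 1) * v < \<mu>^2" "0 < \<mu>"
    and ijk: "i < n" "j < n" "k < n" "i \<noteq> j" "i \<noteq> k" "j \<noteq> k"
    and "xm i \<le> xm j" "xm j \<le> xm k"
  shows "xm j = xm k"
proof (rule ccontr)
  assume "xm j \<noteq> xm k"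
  with \<open>xm j \<le> xm k\<close> have "xm j < xm k"
    by simp
  with \<open>xm i \<le> xm j\<close> obtain p q where pq: "p + 2 * q = xm i + xm j + xm k"
      "p^2 + 2 * q^2 = (xm i)^2 + (xm j)^2 + (xm k)^2" "p * q * q < xm i * xm j * xm k"
    by (rule triple_smoothing_decreases_prod)
  define y where "y = xm(i := p, j := q, k := q)"
  have "mean n y = \<mu>" "variance n y = v"
    using mean_variance_fun_upd3[OF ijk, of p q q xm] pq min(1)
    by (simp_all add: y_def nonneg_seqs_mean_var_def algebra_simps)
  \<comment> \<open>every sequence with these statistics is positive, so the smoothed one stays admissible\<close>
  have pos: "\<forall>l<n. 0 < z l" if "mean n z = \<mu>" "variance n z = v" for z
    using pos_if_variance_small[of n z] small that by simp
  have "y \<in> nonneg_seqs_mean_var n \<mu> v"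
    using pos \<open>mean n y = \<mu>\<close> \<open>variance n y = v\<close> by (simp add: nonneg_seqs_mean_var_def less_imp_le)
  moreover have "(\<Prod>l<n. y l) < (\<Prod>l<n. xm l)"
    unfolding y_def using min(1) pq(3)
    by (intro prod_fun_upd3_less[OF ijk] pos) (simp_all add: nonneg_seqs_mean_var_def)
  ultimately show False
    using min(2) by fastforce
qed

lemma all_but_max_eq:
  fixes x :: "nat \<Rightarrow> 'a :: linorder"
  assumes "2 \<le> n"
    and "\<And>i j k. i < n \<Longrightarrow> j < n \<Longrightarrow> k < n \<Longrightarrow> i \<noteq> j \<Longrightarrow> i \<noteq> k \<Longrightarrow> j \<noteq> k \<Longrightarrow>
      x i \<le> x j \<Longrightarrow> x j \<le> x k \<Longrightarrow> x i = x j"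
  obtains k a where "k < n" "\<forall>i<n. i \<noteq> k \<longrightarrow> x i = a" "a \<le> x k"
proof -
  have "{..<n} \<noteq> {}"
    using assms(1) by (simp add: lessThan_empty_iff)
  then have "Max (x ` {..<n}) \<in> x ` {..<n}"
    by (intro Max_in) simp_all
  then obtain k where "k < n" "x k = Max (x ` {..<n})"
    by (metis imageE lessThan_iff)
  then have k: "k < n" "\<forall>i<n. x i \<le> x k"
    by simp_all
  define i0 where "i0 = (if k = 0 then 1 else (0 :: nat))"
  have i0: "i0 < n" "i0 \<noteq> k"
    using assms(1) by (auto simp: i0_def)
  have "x i = x i0" if "i < n" "i \<noteq> k" "i \<noteq> i0" for i
  proof (cases "x i \<le> x i0")
    case True
    with that i0 k show ?thesis
      by (intro assms(2)) auto
  next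
    case False
    with that i0 k have "x i0 = x i"
      by (intro assms(2)) auto
    then show ?thesis
      by simp
  qed
  with k i0 show ?thesis
    by (intro that[of k "x i0"]) auto
qed

lemma all_but_one_eq_spike_seq:
  fixes x :: "nat \<Rightarrow> real"
  assumes "k < n" "\<forall>i<n. i \<noteq> k \<longrightarrow> x i = a" "mean n x = \<mu>"
  shows "x k = \<mu> + (real n - 1) * (\<mu> - a)"
    and "(\<Prod>i<n. x i) = (\<Prod>i<n. spike_seq n \<mu> (\<mu> - a) i)"
    and "variance n x = (real n - 1) * (\<mu> - a)^2"
proof -
  have sum: "(\<Sum>i<n. f (x i)) = f (x k) + (real n - 1) * f a" for f :: "real \<Rightarrow> real"
  proof -
    have "(\<Sum>i<n. f (x i)) = f (x k) + (\<Sum>i\<in>{..<n} - {k}. f a)"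
      using assms(1,2) by (simp add: sum.remove)
    then show ?thesis
      using assms(1) by (simp add: of_nat_diff)
  qed
  have "0 < n"
    using assms(1) by simp
  then show xk: "x k = \<mu> + (real n - 1) * (\<mu> - a)"
    using assms(3) sum[of "\<lambda>t. t"] by (simp add: mean_def field_simps)
  have "(\<Prod>i<n. x i) = x k * (\<Prod>i\<in>{..<n} - {k}. a)"
    using assms(1,2) by (simp add: prod.remove)
  then show "(\<Prod>i<n. x i) = (\<Prod>i<n. spike_seq n \<mu> (\<mu> - a) i)"
    using assms(1) \<open>0 < n\<close> xk by (simp add: prod_spike_seq)
  show "variance n x = (real n - 1) * (\<mu> - a)^2"
    using \<open>0 < n\<close> assms(3) sum[of "\<lambda>t. (t - \<mu>)^2"] xk
    by (simp add: variance_def field_simps power2_eq_square)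
qed

lemma all_but_one_eq_prod_eq_spike_seq:
  fixes x :: "nat \<Rightarrow> real"
  assumes "2 \<le> n" "k < n" "\<forall>i<n. i \<noteq> k \<longrightarrow> x i = a"
    and "mean n x = \<mu>" "variance n x = (real n - 1) * s^2" "0 \<le> s"
  shows "a \<le> x k \<Longrightarrow> (\<Prod>i<n. x i) = (\<Prod>i<n. spike_seq n \<mu> s i)"
    and "x k \<le> a \<Longrightarrow> (\<Prod>i<n. x i) = (\<Prod>i<n. spike_seq n \<mu> (- s) i)"
proof -
  note spike = all_but_one_eq_spike_seq[OF assms(2-4)]
  have sq: "(\<mu> - a)^2 = s^2" "(a - \<mu>)^2 = s^2"
    using spike(3) assms(1,5) by (simp_all add: power2_commute)
  have diff: "x k - a = real n * (\<mu> - a)"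
    using spike(1) by (simp add: algebra_simps)
  show "(\<Prod>i<n. x i) = (\<Prod>i<n. spike_seq n \<mu> s i)" if "a \<le> x k"
  proof -
    have "0 \<le> real n * (\<mu> - a)"
      using diff that by simp
    then have "0 \<le> \<mu> - a"
      using assms(1) by (simp add: zero_le_mult_iff)
    then have "\<mu> - a = s"
      using sq(1) assms(6) by (simp add: power2_eq_iff_nonneg)
    then show ?thesis
      using spike(2) by simp
  qed
  show "(\<Prod>i<n. x i) = (\<Prod>i<n. spike_seq n \<mu> (- s) i)" if "x k \<le> a"
  proof -
    have "real n * (\<mu> - a) \<le> 0"
      using diff that by simp
    then have "0 \<le> a - \<mu>"
      using assms(1) by (simp add: mult_le_0_iff)
    then have "\<mu> - a = - s"
      using sq(2) assms(6) by (simp add: power2_eq_iff_nonneg)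
    then show ?thesis
      using spike(2) by simp
  qed
qed

lemma prod_le_prod_spike_seq:
  fixes x :: "nat \<Rightarrow> real"
  assumes "2 \<le> n" "\<forall>i<n. 0 \<le> x i" "mean n x = \<mu>" "variance n x = (real n - 1) * s^2"
    and "0 \<le> s" "s < \<mu>"
  shows "(\<Prod>i<n. x i) \<le> (\<Prod>i<n. spike_seq n \<mu> s i)"
proof -
  let ?S = "nonneg_seqs_mean_var n \<mu> ((real n - 1) * s^2)"
  have "0 < n"
    using assms(1) by simp
  have spike_pos: "\<forall>i. 0 < spike_seq n \<mu> s i"
    using assms(5,6) by (simp add: spike_seq_pos)
  then have spike: "spike_seq n \<mu> s \<in> ?S"
    using \<open>0 < n\<close> by (simp add: nonneg_seqs_mean_var_def mean_spike_seq variance_spike_seq less_imp_le)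
  then obtain xm where xm: "xm \<in> ?S" and max: "\<forall>y\<in>?S. (\<Prod>i<n. y i) \<le> (\<Prod>i<n. xm i)"
    using nonneg_seqs_mean_var_prod_attains_max[OF \<open>0 < n\<close>] by blast
  have "0 < (\<Prod>i<n. spike_seq n \<mu> s i)"
    using spike_pos by (intro prod_pos) auto
  then have "0 < (\<Prod>i<n. xm i)"
    using max spike by fastforce
  then have "xm l \<noteq> 0" if "l < n" for l
    using that prod_zero_iff[of "{..<n}" xm] by (metis finite_lessThan lessThan_iff less_irrefl)
  then have xm_pos: "\<forall>l<n. 0 < xm l"
    using xm by (auto simp: nonneg_seqs_mean_var_def order_le_less)
  obtain k a where k: "k < n" "\<forall>i<n. i \<noteq> k \<longrightarrow> xm i = a" "a \<le> xm k"
    by (rule all_but_max_eq[OF assms(1) nonneg_seqs_mean_var_maximizer_shape[OF xm max xm_pos]])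
  then have "(\<Prod>i<n. xm i) = (\<Prod>i<n. spike_seq n \<mu> s i)"
    using xm assms(1,5) by (intro all_but_one_eq_prod_eq_spike_seq(1)) (simp_all add: nonneg_seqs_mean_var_def)
  moreover have "x \<in> ?S"
    using assms(2-4) by (simp add: nonneg_seqs_mean_var_def)
  ultimately show ?thesis
    using max by simp
qed

lemma prod_spike_seq_le_prod:
  fixes x :: "nat \<Rightarrow> real"
  assumes "2 \<le> n" "mean n x = \<mu>" "variance n x = (real n - 1) * s^2"
    and "0 \<le> s" "(real n - 1) * s < \<mu>"
  shows "(\<Prod>i<n. spike_seq n \<mu> (- s) i) \<le> (\<Prod>i<n. x i)"
proof -
  let ?v = "(real n - 1) * s^2"
  let ?S = "nonneg_seqs_mean_var n \<mu> ?v"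
  have "0 < n" "0 \<le> (real n - 1) * s"
    using assms(1,4) by simp_all
  then have small: "(real n - 1) * ?v < \<mu>^2" "0 < \<mu>"
    using assms(5) power_strict_mono[of "(real n - 1) * s" \<mu> 2] by (simp_all add: power2_eq_square mult_ac)
  have S_iff: "y \<in> ?S \<longleftrightarrow> mean n y = \<mu> \<and> variance n y = ?v" for y
    using pos_if_variance_small[of n y] small by (auto simp: nonneg_seqs_mean_var_def less_imp_le)
  then have "x \<in> ?S"
    using assms(2,3) by simp
  then obtain xm where xm: "xm \<in> ?S" and min: "\<forall>y\<in>?S. (\<Prod>i<n. xm i) \<le> (\<Prod>i<n. y i)"
    using nonneg_seqs_mean_var_prod_attains_min[OF \<open>0 < n\<close>] by blast
  have "- xm i = - xm j"
    if "i < n" "j < n" "k < n" "i \<noteq> j" "i \<noteq> k" "j \<noteq> k" "- xm i \<le> - xm j" "- xm j \<le> - xm k"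
    for i j k
    using nonneg_seqs_mean_var_minimizer_shape[OF xm min small, of k j i] that by simp
  then obtain k b where "k < n" "\<forall>i<n. i \<noteq> k \<longrightarrow> - xm i = b" "b \<le> - xm k"
    by (rule all_but_max_eq[OF assms(1)])
  then have "\<forall>i<n. i \<noteq> k \<longrightarrow> xm i = - b" "xm k \<le> - b"
    by auto
  then have "(\<Prod>i<n. xm i) = (\<Prod>i<n. spike_seq n \<mu> (- s) i)"
    using xm S_iff assms(1,4) \<open>k < n\<close> by (intro all_but_one_eq_prod_eq_spike_seq(2)) auto
  then show ?thesis
    using min \<open>x \<in> ?S\<close> by simp
qed

section \<open>Positive sequences with small product\<close>

lemma mean_variance_prepend_spike_seq:
  fixes t \<mu> s m' d :: real
  assumes "0 < m" "real m * m' = (real m + 1) * \<mu> - t"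
    and "(real m - 1) * real m^2 * d^2 = (real m + 1) * ((real m * s)^2 - (\<mu> - t)^2)"
  shows "mean (Suc m) (\<lambda>i. if i = 0 then t else spike_seq m m' d (i - 1)) = \<mu>"
    and "variance (Suc m) (\<lambda>i. if i = 0 then t else spike_seq m m' d (i - 1)) = real m * s^2"
proof -
  let ?x = "\<lambda>i. if i = 0 then t else spike_seq m m' d (i - 1)"
  have sum: "(\<Sum>i<Suc m. f (?x i)) = f t + (\<Sum>i<m. f (spike_seq m m' d i))" for f :: "real \<Rightarrow> real"
    by (simp add: sum.lessThan_Suc_shift del: sum.lessThan_Suc)
  have "(\<Sum>i<m. spike_seq m m' d i) = real m * m'"
    by (simp add: sum_eq_iff_mean_eq[OF assms(1)] mean_spike_seq[OF assms(1)])
  then show mean: "mean (Suc m) ?x = \<mu>"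
    using sum[of "\<lambda>t. t"] assms(2) by (simp add: mean_def field_simps)
  have "(\<Sum>i<m. (spike_seq m m' d i - \<mu>)^2) = real m * ((real m - 1) * d^2) + real m * (m' - \<mu>)^2"
    using sum_sq_dev_eq[of "spike_seq m m' d" \<mu> m] assms(1)
    by (simp add: mean_spike_seq variance_spike_seq)
  moreover have "real m * (m' - \<mu>) = \<mu> - t"
    using assms(2) by (simp add: algebra_simps)
  ultimately have "real m * (\<Sum>i<Suc m. (?x i - \<mu>)^2) = real m * ((real m + 1) * (real m * s^2))"
    using sum[of "\<lambda>y. (y - \<mu>)^2"] assms(3) by algebra
  then have "(\<Sum>i<Suc m. (?x i - \<mu>)^2) = (real m + 1) * (real m * s^2)"
    using assms(1) by simp
  then show "variance (Suc m) ?x = real m * s^2"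
    unfolding variance_def mean by (simp add: add.commute del: sum.lessThan_Suc)
qed

lemma prod_le_sum_power:
  fixes x :: "nat \<Rightarrow> real"
  assumes "\<forall>i<n. 0 \<le> x i"
  shows "(\<Prod>i<n. x i) \<le> (\<Sum>i<n. x i)^n"
proof -
  have "(\<Prod>i<n. x i) \<le> (\<Prod>i<n. (\<Sum>j<n. x j))"
    using assms by (intro prod_mono) (auto intro: member_le_sum)
  then show ?thesis
    by simp
qed

lemma prepended_spike_step_less_mean:
  fixes M \<mu> s t m' d :: real
  assumes "2 \<le> M" "0 < t" "t < \<mu>" "2 * \<mu> * t < M * (\<mu>^2 - s^2)"
    and "M * m' = (M + 1) * \<mu> - t" "(M - 1) * M^2 * d^2 = (M + 1) * ((M * s)^2 - (\<mu> - t)^2)"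
    and "0 \<le> d"
  shows "d < m'"
proof -
  have "(M - 1) * M^2 * (m'^2 - d^2) = M * (M + 1) * (M * (\<mu>^2 - s^2) - 2 * \<mu> * t) + 2 * M * t^2"
    using assms(5,6) by algebra
  moreover have "0 < M * (M + 1) * (M * (\<mu>^2 - s^2) - 2 * \<mu> * t) + 2 * M * t^2"
    using assms(1,4) by (intro add_pos_nonneg mult_pos_pos) simp_all
  ultimately have "0 < (M - 1) * M^2 * (m'^2 - d^2)"
    by simp
  moreover have "0 < (M - 1) * M^2"
    using assms(1) by simp
  ultimately have "d^2 < m'^2"
    by (simp add: zero_less_mult_iff)
  moreover have "0 < m'"
  proof -
    have "0 \<le> M * \<mu>"
      using assms(1-3) by simp
    then have "0 < M * m'"
      using assms(3,5) by (simp add: algebra_simps)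
    then show ?thesis
      using assms(1) by (simp add: zero_less_mult_iff)
  qed
  ultimately show ?thesis
    using power2_less_imp_less[of d m'] by simp
qed

lemma prod_le_first_mult_sum_power:
  fixes x :: "nat \<Rightarrow> real"
  assumes "\<forall>i<Suc m. 0 \<le> x i"
  shows "(\<Prod>i<Suc m. x i) \<le> x 0 * (\<Sum>i<Suc m. x i)^m"
proof -
  have "(\<Prod>i<m. x (Suc i)) \<le> (\<Sum>i<m. x (Suc i))^m"
    using assms by (intro prod_le_sum_power) simp
  also have "\<dots> \<le> (\<Sum>i<Suc m. x i)^m"
    using assms by (intro power_mono sum_nonneg) (simp_all add: sum.lessThan_Suc_shift del: sum.lessThan_Suc)
  finally show ?thesis
    using assms by (simp add: prod.lessThan_Suc_shift mult_left_mono del: prod.lessThan_Suc)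
qed

lemma exists_pos_seq_with_first:
  fixes \<mu> s t :: real
  assumes "2 \<le> m" "0 \<le> s" "0 < t" "t < \<mu>" "\<mu> \<le> real m * s" "2 * \<mu> * t < real m * (\<mu>^2 - s^2)"
  shows "\<exists>x. (\<forall>i. 0 < x i) \<and> mean (Suc m) x = \<mu> \<and> variance (Suc m) x = real m * s^2 \<and>
    (\<Prod>i<Suc m. x i) \<le> t * (real (Suc m) * \<mu>)^m"
proof -
  define M where "M = real m"
  have "2 \<le> M"
    using assms(1) by (simp add: M_def)
  \<comment> \<open>the other m entries form a spike sequence; its mean m' and step d are forced by the
    two moment equations\<close>
  define m' where "m' = ((M + 1) * \<mu> - t) / M"
  define d where "d = sqrt ((M + 1) * ((M * s)^2 - (\<mu> - t)^2) / ((M - 1) * M^2))"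
  have mm': "M * m' = (M + 1) * \<mu> - t"
    using \<open>2 \<le> M\<close> by (simp add: m'_def)
  have "(\<mu> - t)^2 \<le> (M * s)^2"
    using assms(3-5) by (intro power_mono) (simp_all add: M_def)
  then have d: "0 \<le> d" "(M - 1) * M^2 * d^2 = (M + 1) * ((M * s)^2 - (\<mu> - t)^2)"
    using \<open>2 \<le> M\<close> by (simp_all add: d_def)
  have "d < m'"
    using prepended_spike_step_less_mean[OF \<open>2 \<le> M\<close> assms(3,4) _ mm' d(2,1)] assms(6) by (simp add: M_def)
  define x where "x = (\<lambda>i. if i = 0 then t else spike_seq m m' d (i - 1))"
  have pos: "\<forall>i. 0 < x i"
    using assms(3) d(1) \<open>d < m'\<close> by (simp add: x_def spike_seq_pos)
  have stats: "mean (Suc m) x = \<mu>" "variance (Suc m) x = real m * s^2"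
    using mean_variance_prepend_spike_seq[of m m' \<mu> t d s] assms(1) mm' d(2)
    by (simp_all add: x_def M_def)
  have "(\<Sum>i<Suc m. x i) = real (Suc m) * \<mu>" "x 0 = t"
    using stats(1) by (simp_all only: sum_eq_iff_mean_eq zero_less_Suc) (simp add: x_def)
  then have "(\<Prod>i<Suc m. x i) \<le> t * (real (Suc m) * \<mu>)^m"
    using prod_le_first_mult_sum_power[of m x] pos by (simp add: less_imp_le)
  with pos stats show ?thesis
    by blast
qed

lemma exists_pos_seq_prod_less:
  fixes \<mu> \<sigma> \<epsilon> :: real
  assumes "2 \<le> n" "0 \<le> \<sigma>" "\<sigma> < sqrt (real n - 1) * \<mu>" "\<mu> \<le> \<sigma> * sqrt (real n - 1)" "0 < \<epsilon>"
  shows "\<exists>x. (\<forall>i<n. 0 < x i) \<and> mean n x = \<mu> \<and> variance n x = \<sigma>^2 \<and> (\<Prod>i<n. x i) < \<epsilon>"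
proof -
  obtain m where n: "n = Suc m"
    using assms(1) by (cases n) auto
  have "m \<noteq> 1"
    using assms(3,4) n by auto
  then have "2 \<le> m" "real n - 1 = real m"
    using assms(1) n by simp_all
  define s where "s = \<sigma> / sqrt (real m)"
  have "real m * s = \<sigma> * sqrt (real m)" "\<sigma>^2 = real m * s^2"
    using \<open>2 \<le> m\<close> by (simp_all add: s_def mult_div_sqrt power_divide)
  then have s: "0 \<le> s" "s < \<mu>" "\<mu> \<le> real m * s" "\<sigma>^2 = real m * s^2"
    using assms(2-4) \<open>2 \<le> m\<close> \<open>real n - 1 = real m\<close> by (simp_all add: s_def divide_less_eq mult.commute)
  have "0 < \<mu>" "0 < \<mu>^2 - s^2"
    using s(1,2) power_strict_mono[of s \<mu> 2] by simp_all
  define B where "B = (real n * \<mu>)^m"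
  have "0 < B"
    using \<open>0 < \<mu>\<close> assms(1) by (simp add: B_def)
  define c where "c = min \<mu> (min (real m * (\<mu>^2 - s^2) / (2 * \<mu>)) (\<epsilon> / B))"
  have "0 < c"
    using \<open>0 < \<mu>\<close> \<open>0 < \<mu>^2 - s^2\<close> \<open>0 < B\<close> assms(5) \<open>2 \<le> m\<close> by (simp add: c_def)
  moreover have "c \<le> \<mu>" "c \<le> real m * (\<mu>^2 - s^2) / (2 * \<mu>)" "c \<le> \<epsilon> / B"
    by (simp_all add: c_def)
  ultimately have "0 < c / 2" "c / 2 < \<mu>" "c / 2 < real m * (\<mu>^2 - s^2) / (2 * \<mu>)" "c / 2 < \<epsilon> / B"
    by linarith+
  then have t: "0 < c / 2" "c / 2 < \<mu>" "2 * \<mu> * (c / 2) < real m * (\<mu>^2 - s^2)" "c / 2 * B < \<epsilon>"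
    using \<open>0 < \<mu>\<close> \<open>0 < B\<close> by (simp_all add: pos_less_divide_eq mult.commute)
  then obtain x where "\<forall>i. 0 < x i" "mean n x = \<mu>" "variance n x = real m * s^2"
      "(\<Prod>i<n. x i) \<le> c / 2 * B"
    using exists_pos_seq_with_first[OF \<open>2 \<le> m\<close> s(1) t(1,2) s(3) t(3)] unfolding n B_def by blast
  then show ?thesis
    using t(4) s(4) by (intro exI[of _ x]) simp
qed

lemma variance_eq_sdev_div_sqrt:
  assumes "2 \<le> n"
  shows "variance n x = (real n - 1) * (sdev n x / sqrt (real n - 1))^2"
  using assms by (simp add: power_divide sdev_squared)

lemma pos_if_sdev_small:
  fixes x :: "nat \<Rightarrow> real"
  assumes "sdev n x * sqrt (real n - 1) < mean n x" "k < n"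
  shows "0 < x k"
proof -
  have "0 \<le> sdev n x * sqrt (real n - 1)"
    using assms(2) by (simp add: sdev_nonneg)
  then have "(sdev n x * sqrt (real n - 1))^2 < (mean n x)^2" "0 < mean n x"
    using assms(1) by (simp_all add: power_strict_mono)
  then show ?thesis
    using assms sdev_nonneg[of n x]
    by (intro pos_if_variance_small) (simp_all add: power_mult_distrib sdev_squared mult.commute)
qed

lemma prod_le_upper_bd:
  fixes x :: "nat \<Rightarrow> real"
  assumes "2 \<le> n" "\<forall>i<n. 0 < x i"
  shows "(\<Prod>i<n. x i) \<le> upper_bd n (mean n x) (sdev n x)"
proof -
  define s where "s = sdev n x / sqrt (real n - 1)"
  have var: "variance n x = (real n - 1) * s^2"
    using assms(1) by (simp add: s_def variance_eq_sdev_div_sqrt)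
  have "0 < mean n x"
    using assms by (intro mean_pos) simp_all
  moreover have "s^2 < (mean n x)^2"
    using variance_less_if_pos[OF assms] var assms(1) by simp
  ultimately have "s < mean n x"
    using power2_less_imp_less by fastforce
  then show ?thesis
    using prod_le_prod_spike_seq[OF assms(1) _ refl var] assms
    by (simp add: s_def sdev_nonneg upper_bd_eq_prod_spike_seq less_imp_le)
qed

lemma lower_bd_le_prod:
  fixes x :: "nat \<Rightarrow> real"
  assumes "2 \<le> n" "sdev n x * sqrt (real n - 1) < mean n x"
  shows "lower_bd n (mean n x) (sdev n x) \<le> (\<Prod>i<n. x i)"
proof -
  define s where "s = sdev n x / sqrt (real n - 1)"
  have "(real n - 1) * s = sdev n x * sqrt (real n - 1)"
    unfolding s_def using assms(1) by (simp add: mult_div_sqrt)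
  then show ?thesis
    using prod_spike_seq_le_prod[OF assms(1) refl variance_eq_sdev_div_sqrt[OF assms(1)]] assms
    by (simp add: s_def sdev_nonneg lower_bd_eq_prod_spike_seq)
qed

lemma lower_bd_nonpos:
  assumes "2 \<le> n" "0 < \<mu>" "0 \<le> \<sigma>" "\<mu> \<le> \<sigma> * sqrt (real n - 1)"
  shows "lower_bd n \<mu> \<sigma> \<le> 0"
  using assms unfolding lower_bd_def by (intro mult_nonpos_nonneg) simp_all

lemma lower_bd_neg:
  assumes "2 \<le> n" "0 < \<mu>" "\<mu> < \<sigma> * sqrt (real n - 1)"
  shows "lower_bd n \<mu> \<sigma> < 0"
proof -
  have "0 < \<sigma> * sqrt (real n - 1)"
    using assms(2,3) by linarith
  then have "0 < \<sigma>"
    using assms(1) by (auto simp: zero_less_mult_iff)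
  then show ?thesis
    using assms unfolding lower_bd_def by (intro mult_neg_pos zero_less_power add_pos_pos) simp_all
qed

lemma lower_bd_le_prod_if_pos:
  fixes x :: "nat \<Rightarrow> real"
  assumes "2 \<le> n" "\<forall>i<n. 0 < x i"
  shows "lower_bd n (mean n x) (sdev n x) \<le> (\<Prod>i<n. x i)"
proof (cases "sdev n x * sqrt (real n - 1) < mean n x")
  case False
  have "0 < mean n x"
    using assms by (intro mean_pos) simp_all
  then have "lower_bd n (mean n x) (sdev n x) \<le> 0"
    using False assms(1) by (intro lower_bd_nonpos) (simp_all add: sdev_nonneg)
  also have "0 \<le> (\<Prod>i<n. x i)"
    using assms(2) by (intro prod_nonneg) (simp add: less_imp_le)
  finally show ?thesis .
qed (use lower_bd_le_prod assms in blast)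

lemma sdev_less_if_pos:
  fixes x :: "nat \<Rightarrow> real"
  assumes "2 \<le> n" "\<forall>i<n. 0 < x i"
  shows "sdev n x < sqrt (real n - 1) * mean n x"
proof -
  have "0 < mean n x"
    using assms by (intro mean_pos) simp_all
  moreover have "(sdev n x)^2 < (sqrt (real n - 1) * mean n x)^2"
    using variance_less_if_pos[OF assms] assms(1) by (simp add: sdev_squared power_mult_distrib)
  ultimately show ?thesis
    using assms(1) power2_less_imp_less[of "sdev n x"] by simp
qed

lemma exists_pos_seq_prod_eq_lower_bd:
  assumes "2 \<le> n" "0 \<le> \<sigma>" "\<sigma> * sqrt (real n - 1) < \<mu>"
  shows "\<exists>x. (\<forall>i<n. 0 < x i) \<and> mean n x = \<mu> \<and> variance n x = \<sigma>^2 \<and> (\<Prod>i<n. x i) = lower_bd n \<mu> \<sigma>"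
proof -
  have "0 \<le> \<sigma> * sqrt (real n - 1)" "0 \<le> \<sigma> / sqrt (real n - 1)"
    using assms(1,2) by simp_all
  moreover from this(1) have "0 < \<mu>"
    using assms(3) by linarith
  ultimately have "\<forall>i. 0 < spike_seq n \<mu> (- (\<sigma> / sqrt (real n - 1))) i"
    using assms(1,3) by (simp add: spike_seq_def mult_div_sqrt add_pos_nonneg)
  then show ?thesis
    using assms(1)
    by (intro exI[of _ "spike_seq n \<mu> (- (\<sigma> / sqrt (real n - 1)))"])
      (simp add: mean_spike_seq variance_spike_seq power_divide lower_bd_eq_prod_spike_seq)
qed

lemma exists_pos_seq_prod_eq_upper_bd:
  assumes "2 \<le> n" "0 \<le> \<sigma>" "\<sigma> < sqrt (real n - 1) * \<mu>"
  shows "\<exists>x. (\<forall>i<n. 0 < x i) \<and> mean n x = \<mu> \<and> variance n x = \<sigma>^2 \<and> (\<Prod>i<n. x i) = upper_bd n \<mu> \<sigma>"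
proof -
  have "\<sigma> / sqrt (real n - 1) < \<mu>"
    using assms by (simp add: divide_less_eq mult.commute)
  then show ?thesis
    using assms
    by (intro exI[of _ "spike_seq n \<mu> (\<sigma> / sqrt (real n - 1))"])
      (simp add: spike_seq_pos mean_spike_seq variance_spike_seq power_divide upper_bd_eq_prod_spike_seq)
qed

lemma Inf_prod_pos_seqs:
  assumes "2 \<le> n" "0 < \<mu>" "0 \<le> \<sigma>" "\<sigma> < sqrt (real n - 1) * \<mu>"
  shows "max 0 (lower_bd n \<mu> \<sigma>)
    = Inf {(\<Prod>i<n. x i) | x. (\<forall>i<n. 0 < x i) \<and> mean n x = \<mu> \<and> variance n x = \<sigma>^2}"
    (is "_ = Inf ?X")
proof -
  have lower: "max 0 (lower_bd n \<mu> \<sigma>) \<le> y" if y: "y \<in> ?X" for y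
  proof -
    obtain x where x: "y = (\<Prod>i<n. x i)" "\<forall>i<n. 0 < x i" "mean n x = \<mu>" "variance n x = \<sigma>^2"
      using y by blast
    then have "sdev n x = \<sigma>"
      using assms(3) by (simp add: sdev_def)
    then show ?thesis
      using lower_bd_le_prod_if_pos[OF assms(1) x(2)] x prod_nonneg[of "{..<n}" x] by force
  qed
  show ?thesis
  proof (cases "\<sigma> * sqrt (real n - 1) < \<mu>")
    case True
    then obtain x where "\<forall>i<n. 0 < x i" "mean n x = \<mu>" "variance n x = \<sigma>^2" "(\<Prod>i<n. x i) = lower_bd n \<mu> \<sigma>"
      using exists_pos_seq_prod_eq_lower_bd[OF assms(1,3)] by blast
    then have "lower_bd n \<mu> \<sigma> \<in> ?X"
      by force
    then show ?thesis
      using lower by (intro cInf_eq_minimum[symmetric]) auto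
  next
    case False
    have "Inf ?X = 0"
    proof (rule cInf_eq_non_empty)
      show "?X \<noteq> {}"
        using exists_pos_seq_prod_eq_upper_bd[OF assms(1,3,4)] by blast
      show "0 \<le> y" if "y \<in> ?X" for y
        using lower[OF that] by simp
      show "y \<le> 0" if lower_y: "\<And>z. z \<in> ?X \<Longrightarrow> y \<le> z" for y
      proof (rule ccontr)
        assume "\<not> y \<le> 0"
        then have "\<mu> \<le> \<sigma> * sqrt (real n - 1)" "0 < y"
          using False by simp_all
        then obtain x where x: "\<forall>i<n. 0 < x i" "mean n x = \<mu>" "variance n x = \<sigma>^2" "(\<Prod>i<n. x i) < y"
          using exists_pos_seq_prod_less[OF assms(1,3,4)] by blast
        then have "(\<Prod>i<n. x i) \<in> ?X"
          by (auto intro!: exI[of _ x])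
        then have "y \<le> (\<Prod>i<n. x i)"
          by (rule lower_y)
        with x(4) show False
          by simp
      qed
    qed
    moreover have "lower_bd n \<mu> \<sigma> \<le> 0"
      using False assms(1-3) by (intro lower_bd_nonpos) simp_all
    ultimately show ?thesis
      by simp
  qed
qed

lemma cv_less_iffs:
  fixes \<mu> \<sigma> :: real
  assumes "2 \<le> n" "0 < \<mu>"
  shows "\<sigma> / \<mu> < 1 / sqrt (real n - 1) \<longleftrightarrow> \<sigma> * sqrt (real n - 1) < \<mu>"
    and "\<sigma> / \<mu> < sqrt (real n - 1) \<longleftrightarrow> \<sigma> < sqrt (real n - 1) * \<mu>"
    and "1 / sqrt (real n - 1) < \<sigma> / \<mu> \<longleftrightarrow> \<mu> < \<sigma> * sqrt (real n - 1)"
    and "0 \<le> \<sigma> \<Longrightarrow> \<sigma> * sqrt (real n - 1) < \<mu> \<Longrightarrow> \<sigma> < sqrt (real n - 1) * \<mu>"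
proof -
  let ?r = "sqrt (real n - 1)"
  have "1 \<le> ?r" "1 \<le> ?r * ?r"
    using assms(1) by simp_all
  then show "\<sigma> / \<mu> < 1 / ?r \<longleftrightarrow> \<sigma> * ?r < \<mu>" "\<sigma> / \<mu> < ?r \<longleftrightarrow> \<sigma> < ?r * \<mu>"
    "1 / ?r < \<sigma> / \<mu> \<longleftrightarrow> \<mu> < \<sigma> * ?r"
    using assms(2) by (simp_all add: field_simps)
  assume "0 \<le> \<sigma>" "\<sigma> * ?r < \<mu>"
  have "\<sigma> \<le> \<sigma> * (?r * ?r)"
    using \<open>0 \<le> \<sigma>\<close> \<open>1 \<le> ?r * ?r\<close> mult_left_mono[of 1 "?r * ?r" \<sigma>] by simp
  also have "\<dots> = (\<sigma> * ?r) * ?r"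
    by (simp only: mult.assoc)
  also have "\<dots> < \<mu> * ?r"
    using \<open>\<sigma> * ?r < \<mu>\<close> \<open>1 \<le> ?r\<close> by (intro mult_strict_right_mono) simp_all
  finally show "\<sigma> < ?r * \<mu>"
    by (simp only: mult.commute)
qed

theorem theorem1:
  fixes n :: nat
  assumes "n \<ge> 2"
  shows
    \<comment> \<open>(a) bounds\<close>
    "(\<forall>x. mean n x > 0 \<and> sdev n x / mean n x < 1 / sqrt (real n - 1) \<longrightarrow>
        (\<forall>i<n. x i > 0) \<and>
        lower_bd n (mean n x) (sdev n x) \<le> (\<Prod>i<n. x i) \<and>
        (\<Prod>i<n. x i) \<le> upper_bd n (mean n x) (sdev n x))
   \<and>
    \<comment> \<open>(a) sharpness\<close>
    (\<forall>\<mu> \<sigma>. \<mu> > 0 \<and> 0 \<le> \<sigma> / \<mu> \<and> \<sigma> \<ge> 0 \<and> \<sigma> / \<mu> < 1 / sqrt (real n - 1) \<longrightarrow>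
        (\<exists>x. mean n x = \<mu> \<and> variance n x = \<sigma>^2 \<and> (\<Prod>i<n. x i) = lower_bd n \<mu> \<sigma>) \<and>
        (\<exists>x. mean n x = \<mu> \<and> variance n x = \<sigma>^2 \<and> (\<Prod>i<n. x i) = upper_bd n \<mu> \<sigma>))
   \<and>
    \<comment> \<open>(b) bounds for positive sequences\<close>
    (\<forall>x. (\<forall>i<n. x i > 0) \<longrightarrow>
        0 \<le> sdev n x / mean n x \<and> sdev n x / mean n x < sqrt (real n - 1) \<and>
        lower_bd n (mean n x) (sdev n x) \<le> (\<Prod>i<n. x i) \<and>
        (\<Prod>i<n. x i) \<le> upper_bd n (mean n x) (sdev n x))
   \<and>
    \<comment> \<open>(b) sharpness of the upper bound\<close>
    (\<forall>\<mu> \<sigma>. \<mu> > 0 \<and> \<sigma> \<ge> 0 \<and> \<sigma> / \<mu> < sqrt (real n - 1) \<longrightarrow>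
        (\<exists>x. (\<forall>i<n. x i > 0) \<and> mean n x = \<mu> \<and> variance n x = \<sigma>^2 \<and>
             (\<Prod>i<n. x i) = upper_bd n \<mu> \<sigma>))
   \<and>
    \<comment> \<open>(b) negativity of the lower bound expression\<close>
    (\<forall>\<mu> \<sigma>. \<mu> > 0 \<and> 1 / sqrt (real n - 1) < \<sigma> / \<mu> \<and> \<sigma> / \<mu> < sqrt (real n - 1) \<longrightarrow>
        lower_bd n \<mu> \<sigma> < 0)
   \<and>
    \<comment> \<open>(b) max(0, lower bound) is the infimum\<close>
    (\<forall>\<mu> \<sigma>. \<mu> > 0 \<and> \<sigma> \<ge> 0 \<and> \<sigma> / \<mu> < sqrt (real n - 1) \<longrightarrow>
        max 0 (lower_bd n \<mu> \<sigma>) =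
          Inf {(\<Prod>i<n. x i) | x. (\<forall>i<n. x i > 0) \<and> mean n x = \<mu> \<and> variance n x = \<sigma>^2})"
proof -
  note cv = cv_less_iffs[OF assms]
  show ?thesis
    apply (intro conjI allI impI; (elim conjE)?)
    subgoal for x using pos_if_sdev_small[of n x] cv by blast
    subgoal for x using lower_bd_le_prod[OF assms, of x] cv by blast
    subgoal for x using prod_le_upper_bd[OF assms] pos_if_sdev_small[of n x] cv by blast
    subgoal for \<mu> \<sigma> using exists_pos_seq_prod_eq_lower_bd[OF assms, of \<sigma> \<mu>] cv by blast
    subgoal for \<mu> \<sigma> using exists_pos_seq_prod_eq_upper_bd[OF assms, of \<sigma> \<mu>] cv by blast
    subgoal for x using sdev_nonneg[of n x] mean_pos[of n x] assms by simp
    subgoal for x using sdev_less_if_pos[OF assms, of x] mean_pos[of n x] cv assms by simp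
    subgoal for x using lower_bd_le_prod_if_pos[OF assms] by blast
    subgoal for x using prod_le_upper_bd[OF assms] by blast
    subgoal for \<mu> \<sigma> using exists_pos_seq_prod_eq_upper_bd[OF assms, of \<sigma> \<mu>] cv by blast
    subgoal for \<mu> \<sigma> using lower_bd_neg[OF assms, of \<mu> \<sigma>] cv by blast
    subgoal for \<mu> \<sigma> using Inf_prod_pos_seqs[OF assms, of \<mu> \<sigma>] cv by blast
    done
qed

end
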